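(* Let $\{m_k:k\ge0\}$ be positive reals with $\sum_k m_k=\infty$ and $m_k\to0$; let $S_0=0$ and $S_{k+1}=\sum_{i=0}^k m_i$. Define $f_j:(S_j,S_{j+1}]\to\mathbb{R}$, $j\ge0$, recursively with $c_0=0$ and $c_j=f_{j-1}(S_j)$ for $j\ge1$, by $$f_j(x)=\begin{cases}-x+S_j+c_j & x\in(S_j,S_j+\tfrac{m_j}{16})\\ \tfrac{8}{m_j}(x-S_j-\tfrac{m_j}{8})^2-\tfrac{3m_j}{32}+c_j & x\in[S_j+\tfrac{m_j}{16},S_j+\tfrac{3m_j}{16})\\ -\tfrac{5m_j}{16}\exp\!\big(\tfrac{5m_j/16}{x-S_j-m_j/2}+1\big)+\tfrac{m_j}{4}+c_j & x\in[S_j+\tfrac{3m_j}{16},S_j+\tfrac{m_j}{2})\\ \tfrac{m_j}{4}+c_j & x=S_j+\tfrac{m_j}{2}\\ \tfrac{5m_j}{16}\exp\!\big(\tfrac{-5m_j/16}{x-S_j-m_j/2}+1\big)+\tfrac{m_j}{4}+c_j & x\in(S_j+\tfrac{m_j}{2},S_j+\tfrac{13m_j}{16})\\ -\tfrac{8}{m_j}(x-S_j-\tfrac{7m_j}{8})^2+\tfrac{19m_j}{32}+c_j & x\in[S_j+\tfrac{13m_j}{16},S_j+\tfrac{15m_j}{16})\\ -x+S_j+\tfrac{3m_j}{2}+c_j & x\in[S_j+\tfrac{15m_j}{16},S_{j+1}],\end{cases}$$ and define $F:\mathbb{R}\to\mathbb{R}$ by $F(x)=-x$ for $x\le0$ and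 $F(x)=f_j(x)$ for $x\in(S_j,S_{j+1}]$, $j\ge0$. Then $F$ is continuous and differentiable on $\mathbb{R}$, is bounded from below, and its derivative $\dot F$ is locally Lipschitz continuous. Moreover, $F(S_j)=S_j/2$ and $\dot F(S_j)=-1$ for all $j\ge0$. *)

theory Defs
  imports "HOL-Analysis.Analysis"
begin

definition partS :: "(nat \<Rightarrow> real) \<Rightarrow> nat \<Rightarrow> real" where
  "partS m j = (\<Sum>i<j. m i)"

text \<open>The piece f_j on (S_j, S_(j+1)] with offset constant c = c_j
  (values outside (S_j, S_(j+1)] are irrelevant).\<close>
definition fpiece :: "(nat \<Rightarrow> real) \<Rightarrow> real \<Rightarrow> nat \<Rightarrow> real \<Rightarrow> real" where
  "fpiece m c j x =
    (let s = partS m j; mj = m j in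
     if x < s + mj/16 then - x + s + c
     else if x < s + 3*mj/16 then 8/mj * (x - s - mj/8)^2 - 3*mj/32 + c
     else if x < s + mj/2 then
       - (5*mj/16) * exp ((5*mj/16) / (x - s - mj/2) + 1) + mj/4 + c
     else if x = s + mj/2 then mj/4 + c
     else if x < s + 13*mj/16 then
       (5*mj/16) * exp ((- 5*mj/16) / (x - s - mj/2) + 1) + mj/4 + c
     else if x < s + 15*mj/16 then - 8/mj * (x - s - 7*mj/8)^2 + 19*mj/32 + c
     else - x + s + 3*mj/2 + c)"

primrec cconst :: "(nat \<Rightarrow> real) \<Rightarrow> nat \<Rightarrow> real" where
  "cconst m 0 = 0"
| "cconst m (Suc j) = fpiece m (cconst m j) j (partS m (Suc j))"

definition fj :: "(nat \<Rightarrow> real) \<Rightarrow> nat \<Rightarrow> real \<Rightarrow> real" where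
  "fj m j x = fpiece m (cconst m j) j x"

definition bigF :: "(nat \<Rightarrow> real) \<Rightarrow> real \<Rightarrow> real" where
  "bigF m x = (if x \<le> 0 then - x
     else fj m (THE j. partS m j < x \<and> x \<le> partS m (Suc j)) x)"

end

theory Submission
  imports Defs "HOL-Real_Asymp.Real_Asymp"
begin

(*
  All pieces are affine copies of one profile phi:
  f_j(x) = S_j/2 + m_j phi((x - S_j)/m_j), where phi(u) = -u for u <= 1/16 and
  phi(u) = 3/2 - u for u >= 15/16; since phi(1) = 1/2 this makes c_j = S_j/2.
  Just left and right of S_j both f_(j-1) and f_j equal 3 S_j/2 - x, so near every
  point F coincides with a single copy.  The profile is differentiable with globally
  Lipschitz derivative: in the middle it is built from
  t |-> sgn t * (5/16) * exp(1 - (5/16)/|t|), whose derivative is flat at 0 and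
  whose second derivative is bounded.  Hence F is
  differentiable, F' is (3000/m_j)-Lipschitz near points of [S_j, S_(j+1)),
  F(S_j) = S_j/2 and F'(S_j) = phi'(0) = -1.  Finally F >= m_j min phi on
  (S_j, S_(j+1)], which is bounded below because (m_k) converges.
*)

lemma DERIV_glue:
  fixes f g h :: "real \<Rightarrow> real"
  assumes "a < b" "b < c"
    and fg: "\<And>x. x \<in> {a..b} \<Longrightarrow> f x = g x" and fh: "\<And>x. x \<in> {b..c} \<Longrightarrow> f x = h x"
    and g: "(g has_real_derivative D) (at b)" and h: "(h has_real_derivative D) (at b)"
  shows "(f has_real_derivative D) (at b)"
proof -
  have "eventually (\<lambda>x. f x = g x) (at_left b)"
    using eventually_at_left_real[OF \<open>a < b\<close>] by eventually_elim (use fg in auto)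
  then have left: "(f has_real_derivative D) (at_left b)"
    using has_field_derivative_at_within[OF g] fg[of b] \<open>a < b\<close>
    by (subst has_field_derivative_cong_eventually) auto
  have "eventually (\<lambda>x. f x = h x) (at_right b)"
    using eventually_at_right_real[OF \<open>b < c\<close>] by eventually_elim (use fh in auto)
  then have right: "(f has_real_derivative D) (at_right b)"
    using has_field_derivative_at_within[OF h] fh[of b] \<open>b < c\<close>
    by (subst has_field_derivative_cong_eventually) auto
  from left right show ?thesis
    by (simp add: has_field_derivative_iff filterlim_at_split)
qed

lemma bounded_real_derivative_imp_lipschitz:
  fixes g g' :: "real \<Rightarrow> real"
  assumes "convex S" "continuous_on S g"
    and deriv: "\<And>z. z \<in> interior S \<Longrightarrow> (g has_real_derivative g' z) (at z)"
    and bound: "\<And>z. z \<in> interior S \<Longrightarrow> \<bar>g' z\<bar> \<le> K" and "0 \<le> K"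
  shows "K-lipschitz_on S g"
proof (rule lipschitz_on_leI)
  fix x y assume "x \<in> S" "y \<in> S" "x \<le> y"
  show "dist (g x) (g y) \<le> K * dist x y"
  proof (cases "x = y")
    case False
    with \<open>x \<le> y\<close> have "x < y" by simp
    have "closed_segment x y \<subseteq> S"
      using assms(1) \<open>x \<in> S\<close> \<open>y \<in> S\<close> by (simp add: convex_contains_segment)
    then have sub: "{x..y} \<subseteq> S"
      using \<open>x \<le> y\<close> by (simp add: closed_segment_eq_real_ivl)
    have int: "z \<in> interior S" if "x < z" "z < y" for z
    proof -
      have "{x<..<y} \<subseteq> interior S"
        using sub by (intro interior_maximal) auto
      then show ?thesis using that by auto
    qed
    obtain l z where z: "x < z" "z < y" "(g has_real_derivative l) (at z)" "g y - g x = (y - x) * l"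
      using MVT[OF \<open>x < y\<close> continuous_on_subset[OF assms(2) sub]] deriv int
      by (meson real_differentiable_def)
    have "\<bar>l\<bar> \<le> K"
      using DERIV_unique[OF z(3) deriv[OF int]] bound[OF int] z(1,2) by simp
    then have "\<bar>g y - g x\<bar> \<le> (y - x) * K"
      using z(4) \<open>x < y\<close> by (simp add: abs_mult mult_left_mono)
    then show ?thesis
      by (simp add: dist_real_def abs_minus_commute \<open>x \<le> y\<close> mult.commute)
  qed (use \<open>0 \<le> K\<close> in simp)
qed fact

lemma lipschitz_on_UNIV_closed_Union:
  fixes f :: "real \<Rightarrow> 'a::metric_space"
  assumes "finite \<C>" "\<Union>\<C> = UNIV" "\<And>C. C \<in> \<C> \<Longrightarrow> closed C"
    and "\<And>C. C \<in> \<C> \<Longrightarrow> L-lipschitz_on C f" "0 \<le> L"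
  shows "L-lipschitz_on UNIV f"
proof (rule lipschitz_onI)
  fix x y :: real
  have "L-lipschitz_on {min x y..max x y} f"
    by (rule lipschitz_on_closed_Union[where U=id]) (use assms in auto)
  then show "dist (f x) (f y) \<le> L * dist x y"
    by (rule lipschitz_onD) auto
qed fact

lemma power_le_exp:
  fixes x :: real
  assumes "0 \<le> x" "0 < n"
  shows "x ^ n \<le> real n ^ n * exp x"
proof -
  have "(x / n) ^ n \<le> (1 + x / n) ^ n"
    using assms by (intro power_mono) auto
  also have "\<dots> \<le> exp x"
    using assms by (intro exp_ge_one_plus_x_over_n_power_n) auto
  finally show ?thesis
    using assms by (simp add: power_divide field_simps)
qed

(* At t = 0 both formulas give 0 (sgn 0 = 0 and x / 0 = 0), which is the correct value. *)
definition flat_sigmoid :: "real \<Rightarrow> real" where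
  "flat_sigmoid t = sgn t * (5/16) * exp (1 - (5/16) / \<bar>t\<bar>)"

definition flat_sigmoid_deriv :: "real \<Rightarrow> real" where
  "flat_sigmoid_deriv t = (5/16)^2 / t^2 * exp (1 - (5/16) / \<bar>t\<bar>)"

lemma flat_sigmoid_0: "flat_sigmoid 0 = 0"
  and flat_sigmoid_neg: "t < 0 \<Longrightarrow> flat_sigmoid t = - (5/16) * exp ((5/16) / t + 1)"
  and flat_sigmoid_pos: "t > 0 \<Longrightarrow> flat_sigmoid t = (5/16) * exp ((- 5/16) / t + 1)"
  by (simp_all add: flat_sigmoid_def)

lemma flat_sigmoid_has_derivative: "(flat_sigmoid has_real_derivative flat_sigmoid_deriv t) (at t)"
proof -
  consider "t < 0" | "t = 0" | "t > 0" by linarith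
  then show ?thesis
  proof cases
    case 1
    have "((\<lambda>t. - (5/16) * exp ((5/16) / t + 1)) has_real_derivative flat_sigmoid_deriv t) (at t)"
      using 1 by (auto intro!: derivative_eq_intros simp: flat_sigmoid_deriv_def power2_eq_square field_simps)
    then show ?thesis
      by (rule has_field_derivative_transform_within_open[where S="{..<0}"]) (use 1 flat_sigmoid_neg in auto)
  next
    case 2
    have "((\<lambda>y. flat_sigmoid y / y) \<longlongrightarrow> 0) (at 0)"
      unfolding flat_sigmoid_def by real_asymp
    then show ?thesis
      using 2 by (simp add: has_field_derivative_iff flat_sigmoid_deriv_def flat_sigmoid_def)
  next
    case 3
    have "((\<lambda>t. (5/16) * exp ((- 5/16) / t + 1)) has_real_derivative flat_sigmoid_deriv t) (at t)"
      using 3 by (auto intro!: derivative_eq_intros simp: flat_sigmoid_deriv_def power2_eq_square field_simps)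
    then show ?thesis
      by (rule has_field_derivative_transform_within_open[where S="{0<..}"]) (use 3 flat_sigmoid_pos in auto)
  qed
qed

lemma isCont_flat_sigmoid_deriv: "isCont flat_sigmoid_deriv t"
proof (cases "t = 0")
  case True
  have "(flat_sigmoid_deriv \<longlongrightarrow> 0) (at 0)"
    unfolding flat_sigmoid_deriv_def by real_asymp
  then show ?thesis
    using True by (simp add: isCont_def flat_sigmoid_deriv_def)
qed (auto simp: flat_sigmoid_deriv_def[abs_def] intro!: continuous_intros)

lemma flat_sigmoid_deriv_has_derivative_pos:
  assumes "t > 0"
  shows "(flat_sigmoid_deriv has_real_derivative
      (5/16)^2 * exp (1 - (5/16) / t) * ((5/16) / t^4 - 2 / t^3)) (at t)"
proof -
  have "((\<lambda>t. (5/16)^2 / t^2 * exp (1 - (5/16) / t)) has_real_derivative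
      (5/16)^2 * exp (1 - (5/16) / t) * ((5/16) / t^4 - 2 / t^3)) (at t)"
    using assms by (auto intro!: derivative_eq_intros simp: power2_eq_square field_simps eval_nat_numeral)
  then show ?thesis
    by (rule has_field_derivative_transform_within_open[where S="{0<..}"])
       (use assms in \<open>auto simp: flat_sigmoid_deriv_def\<close>)
qed

(* With x = (5/16) / t the second derivative is (16/5) e (x^4 - 2 x^3) exp (- x). *)
lemma flat_sigmoid_second_deriv_bound:
  fixes t :: real
  assumes "t > 0"
  shows "\<bar>(5/16)^2 * exp (1 - (5/16) / t) * ((5/16) / t^4 - 2 / t^3)\<bar> \<le> 3000"
proof -
  define x where "x = (5/16) / t"
  have x: "x > 0" and t: "t = (5/16) / x"
    using assms by (simp_all add: x_def)
  have "(5/16)^2 * exp (1 - (5/16) / t) * ((5/16) / t^4 - 2 / t^3)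
      = exp 1 * (x^4 - 2 * x^3) / exp x * (16/5)"
    unfolding t using x by (simp add: exp_diff field_simps eval_nat_numeral)
  also have "\<bar>\<dots>\<bar> = exp 1 * \<bar>x^4 - 2 * x^3\<bar> / exp x * (16/5)"
    by (simp add: abs_mult)
  also have "\<dots> \<le> exp 1 * (310 * exp x) / exp x * (16/5)"
  proof -
    have "\<bar>x^4 - 2 * x^3\<bar> \<le> 310 * exp x"
      using power_le_exp[of x 4] power_le_exp[of x 3] x
      by (simp add: abs_le_iff) (smt (verit) zero_le_power)
    then show ?thesis
      by (intro mult_right_mono divide_right_mono mult_left_mono) auto
  qed
  also have "\<dots> \<le> 3000"
    using exp_le by simp
  finally show ?thesis .
qed

lemma flat_sigmoid_deriv_lipschitz: "3000-lipschitz_on UNIV flat_sigmoid_deriv"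
proof (rule lipschitz_on_UNIV_closed_Union[where \<C>="{{..0}, {0..}}"])
  have nonneg: "3000-lipschitz_on {0..} flat_sigmoid_deriv"
    by (rule bounded_real_derivative_imp_lipschitz)
       (auto intro!: continuous_at_imp_continuous_on isCont_flat_sigmoid_deriv
         flat_sigmoid_deriv_has_derivative_pos flat_sigmoid_second_deriv_bound)
  have "3000-lipschitz_on {..0} flat_sigmoid_deriv"
  proof (rule lipschitz_onI)
    fix x y :: real assume "x \<in> {..0}" "y \<in> {..0}"
    then have "dist (flat_sigmoid_deriv (-x)) (flat_sigmoid_deriv (-y)) \<le> 3000 * dist (-x) (-y)"
      by (intro lipschitz_onD[OF nonneg]) auto
    then show "dist (flat_sigmoid_deriv x) (flat_sigmoid_deriv y) \<le> 3000 * dist x y"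
      by (simp add: flat_sigmoid_deriv_def dist_minus)
  qed simp
  with nonneg show "C \<in> {{..0}, {0..}} \<Longrightarrow> 3000-lipschitz_on C flat_sigmoid_deriv" for C
    by auto
qed auto

definition profile :: "real \<Rightarrow> real" where
  "profile u = (if u < 1/16 then - u
     else if u < 3/16 then 8 * (u - 1/8)^2 - 3/32
     else if u < 13/16 then 1/4 + flat_sigmoid (u - 1/2)
     else if u < 15/16 then - 8 * (u - 7/8)^2 + 19/32
     else 3/2 - u)"

definition profile_deriv :: "real \<Rightarrow> real" where
  "profile_deriv u = (if u < 1/16 then - 1
     else if u < 3/16 then 16 * (u - 1/8)
     else if u < 13/16 then flat_sigmoid_deriv (u - 1/2)
     else if u < 15/16 then - 16 * (u - 7/8)
     else - 1)"

(* The boundary cases reach simp as u * 16 = k; eq_divide_imp turns them back into u = k / 16. *)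
lemma profile_on_pieces:
  "u \<le> 1/16 \<Longrightarrow> profile u = - u"
  "1/16 \<le> u \<Longrightarrow> u \<le> 3/16 \<Longrightarrow> profile u = 8 * (u - 1/8)^2 - 3/32"
  "3/16 \<le> u \<Longrightarrow> u \<le> 13/16 \<Longrightarrow> profile u = 1/4 + flat_sigmoid (u - 1/2)"
  "13/16 \<le> u \<Longrightarrow> u \<le> 15/16 \<Longrightarrow> profile u = - 8 * (u - 7/8)^2 + 19/32"
  "15/16 \<le> u \<Longrightarrow> profile u = 3/2 - u"
  by (auto simp: profile_def flat_sigmoid_def power2_eq_square dest!: eq_divide_imp[rotated])

lemma profile_deriv_on_pieces:
  "u \<le> 1/16 \<Longrightarrow> profile_deriv u = - 1"
  "1/16 \<le> u \<Longrightarrow> u \<le> 3/16 \<Longrightarrow> profile_deriv u = 16 * (u - 1/8)"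
  "3/16 \<le> u \<Longrightarrow> u \<le> 13/16 \<Longrightarrow> profile_deriv u = flat_sigmoid_deriv (u - 1/2)"
  "13/16 \<le> u \<Longrightarrow> u \<le> 15/16 \<Longrightarrow> profile_deriv u = - 16 * (u - 7/8)"
  "15/16 \<le> u \<Longrightarrow> profile_deriv u = - 1"
  by (auto simp: profile_deriv_def flat_sigmoid_deriv_def dest!: eq_divide_imp[rotated])

lemma profile_has_derivative: "(profile has_real_derivative profile_deriv u) (at u)"
proof -
  define p1 p2 p3 p4 p5 :: "real \<Rightarrow> real"
    where "p1 u = - u" and "p2 u = 8 * (u - 1/8)^2 - 3/32" and "p3 u = 1/4 + flat_sigmoid (u - 1/2)"
      and "p4 u = - 8 * (u - 7/8)^2 + 19/32" and "p5 u = 3/2 - u" for u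
  have "D = - 1 \<Longrightarrow> (p1 has_real_derivative D) (at u)"
    and "D = 16 * (u - 1/8) \<Longrightarrow> (p2 has_real_derivative D) (at u)"
    and "D = flat_sigmoid_deriv (u - 1/2) \<Longrightarrow> (p3 has_real_derivative D) (at u)"
    and "D = - 16 * (u - 7/8) \<Longrightarrow> (p4 has_real_derivative D) (at u)"
    and "D = - 1 \<Longrightarrow> (p5 has_real_derivative D) (at u)"
    for u D :: real
    unfolding p1_def[abs_def] p2_def[abs_def] p3_def[abs_def] p4_def[abs_def] p5_def[abs_def]
    by (auto intro!: derivative_eq_intros DERIV_chain2[OF flat_sigmoid_has_derivative])
  note facts = this profile_on_pieces profile_deriv_on_pieces
    p1_def p2_def p3_def p4_def p5_def flat_sigmoid_deriv_def
  consider "u < 1/16" | "u = 1/16" | "1/16 < u" "u < 3/16" | "u = 3/16" | "3/16 < u" "u < 13/16"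
    | "u = 13/16" | "13/16 < u" "u < 15/16" | "u = 15/16" | "15/16 < u"
    by linarith
  then show ?thesis
  proof cases
    case 1
    show ?thesis
      by (rule DERIV_glue[where a="u - 1" and c="1/16" and g=p1 and h=p1]) (use 1 in \<open>auto simp: facts\<close>)
  next
    case 2
    show ?thesis
      unfolding 2 by (rule DERIV_glue[where a=0 and c="3/16" and g=p1 and h=p2]) (auto simp: facts)
  next
    case 3
    show ?thesis
      by (rule DERIV_glue[where a="1/16" and c="3/16" and g=p2 and h=p2]) (use 3 in \<open>auto simp: facts\<close>)
  next
    case 4
    show ?thesis
      unfolding 4 by (rule DERIV_glue[where a="1/16" and c="13/16" and g=p2 and h=p3]) (auto simp: facts)
  next
    case 5
    show ?thesis
      by (rule DERIV_glue[where a="3/16" and c="13/16" and g=p3 and h=p3]) (use 5 in \<open>auto simp: facts\<close>)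
  next
    case 6
    show ?thesis
      unfolding 6 by (rule DERIV_glue[where a="3/16" and c="15/16" and g=p3 and h=p4]) (auto simp: facts)
  next
    case 7
    show ?thesis
      by (rule DERIV_glue[where a="13/16" and c="15/16" and g=p4 and h=p4]) (use 7 in \<open>auto simp: facts\<close>)
  next
    case 8
    show ?thesis
      unfolding 8 by (rule DERIV_glue[where a="13/16" and c=1 and g=p4 and h=p5]) (auto simp: facts)
  next
    case 9
    show ?thesis
      by (rule DERIV_glue[where a="15/16" and c="u + 1" and g=p5 and h=p5]) (use 9 in \<open>auto simp: facts\<close>)
  qed
qed

lemma profile_deriv_lipschitz: "3000-lipschitz_on UNIV profile_deriv"
proof (rule lipschitz_on_UNIV_closed_Union
    [where \<C>="{{..1/16}, {1/16..3/16}, {3/16..13/16}, {13/16..15/16}, {15/16..}}"])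
  have affine: "3000-lipschitz_on S profile_deriv"
    if "\<And>u. u \<in> S \<Longrightarrow> profile_deriv u = a * u + b" "\<bar>a\<bar> \<le> 3000" for S a b
  proof (rule lipschitz_onI)
    fix x y assume "x \<in> S" "y \<in> S"
    then have "dist (profile_deriv x) (profile_deriv y) = \<bar>a\<bar> * dist x y"
      using that(1) by (simp add: dist_real_def flip: abs_mult right_diff_distrib)
    then show "dist (profile_deriv x) (profile_deriv y) \<le> 3000 * dist x y"
      using that(2) by (simp add: mult_right_mono)
  qed simp
  have "3000-lipschitz_on {3/16..13/16} profile_deriv"
  proof (rule lipschitz_onI)
    fix x y :: real assume "x \<in> {3/16..13/16}" "y \<in> {3/16..13/16}"
    then show "dist (profile_deriv x) (profile_deriv y) \<le> 3000 * dist x y"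
      using lipschitz_onD[OF flat_sigmoid_deriv_lipschitz, of "x - 1/2" "y - 1/2"]
      by (simp add: profile_deriv_on_pieces dist_real_def)
  qed simp
  moreover have "3000-lipschitz_on {..1/16} profile_deriv" "3000-lipschitz_on {15/16..} profile_deriv"
    by (rule affine[where a=0 and b="-1"]; simp add: profile_deriv_on_pieces)+
  moreover have "3000-lipschitz_on {1/16..3/16} profile_deriv"
    by (rule affine[where a=16 and b="-2"]) (auto simp: profile_deriv_on_pieces)
  moreover have "3000-lipschitz_on {13/16..15/16} profile_deriv"
    by (rule affine[where a="-16" and b=14]) (auto simp: profile_deriv_on_pieces)
  ultimately show "C \<in> {{..1/16}, {1/16..3/16}, {3/16..13/16}, {13/16..15/16}, {15/16..}}
      \<Longrightarrow> 3000-lipschitz_on C profile_deriv" for C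
    by auto
qed auto

lemma profile_1: "profile 1 = 1/2"
  by (simp add: profile_def)

lemma profile_bounded_below_on_unit_interval: "\<exists>P \<le> 0. \<forall>u \<in> {0..1}. P \<le> profile u"
proof -
  have "continuous_on {0..1} profile"
    using DERIV_isCont[OF profile_has_derivative] by (intro continuous_at_imp_continuous_on) blast
  then have "bdd_below (profile ` {0..1})"
    by (intro bounded_imp_bdd_below compact_imp_bounded compact_continuous_image) auto
  then obtain P where "\<forall>u \<in> {0..1}. P \<le> profile u"
    by (auto simp: bdd_below_def)
  then show ?thesis
    by (intro exI[of _ "min P 0"]) auto
qed

lemma fpiece_eq_profile:
  assumes "0 < m j"
  shows "fpiece m c j x = c + m j * profile ((x - partS m j) / m j)"
proof -
  define s M u where "s = partS m j" and "M = m j" and "u = (x - s) / M"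
  have M: "0 < M" and x: "x = s + M * u"
    using assms by (simp_all add: M_def u_def)
  have shift: "x - s - M/2 = M * (u - 1/2)"
    unfolding x by (simp add: algebra_simps)
  have "fpiece m c j x = (if u < 1/16 then c - M * u
     else if u < 3/16 then c + M * (8 * (u - 1/8)^2 - 3/32)
     else if u < 1/2 then c + M * (1/4 - (5/16) * exp ((5/16) / (u - 1/2) + 1))
     else if u = 1/2 then c + M / 4
     else if u < 13/16 then c + M * (1/4 + (5/16) * exp ((- 5/16) / (u - 1/2) + 1))
     else if u < 15/16 then c + M * (- 8 * (u - 7/8)^2 + 19/32)
     else c + M * (3/2 - u))"
    using M unfolding fpiece_def Let_def s_def[symmetric] M_def[symmetric] shift
    by (simp add: x field_simps power2_eq_square)
  also have "\<dots> = c + M * profile u"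
    by (auto simp: profile_def flat_sigmoid_neg flat_sigmoid_pos flat_sigmoid_0 dest!: eq_divide_imp[rotated])
  finally show ?thesis
    by (simp add: u_def s_def M_def)
qed

lemma partS_0 [simp]: "partS m 0 = 0"
  and partS_Suc: "partS m (Suc j) = partS m j + m j"
  by (simp_all add: partS_def)

locale divergent_step_sizes =
  fixes m :: "nat \<Rightarrow> real"
  assumes pos: "\<And>k. 0 < m k"
    and div: "filterlim (\<lambda>n. \<Sum>k<n. m k) at_top sequentially"
begin

definition rescaled_profile :: "nat \<Rightarrow> real \<Rightarrow> real" where
  "rescaled_profile j x = partS m j / 2 + m j * profile ((x - partS m j) / m j)"

lemma cconst_eq_half_partS: "cconst m j = partS m j / 2"
  by (induction j) (simp_all add: fpiece_eq_profile pos partS_Suc profile_1)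

lemma fj_eq_rescaled_profile: "fj m j x = rescaled_profile j x"
  by (simp add: fj_def fpiece_eq_profile pos cconst_eq_half_partS rescaled_profile_def)

lemma rescaled_profile_has_derivative:
  "(rescaled_profile j has_real_derivative profile_deriv ((x - partS m j) / m j)) (at x)"
proof -
  have "((\<lambda>x. profile ((x - partS m j) / m j)) has_real_derivative
      profile_deriv ((x - partS m j) / m j) * (1 / m j)) (at x)"
    by (rule DERIV_chain2[OF profile_has_derivative]) (use pos[of j] in \<open>auto intro!: derivative_eq_intros\<close>)
  then show ?thesis
    unfolding rescaled_profile_def[abs_def] using pos[of j]
    by (auto intro!: derivative_eq_intros)
qed

lemma rescaled_profile_left:
    "y \<le> partS m j + m j / 16 \<Longrightarrow> rescaled_profile j y = 3 * partS m j / 2 - y"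
  and rescaled_profile_right:
    "partS m j + 15 * m j / 16 \<le> y \<Longrightarrow> rescaled_profile j y = 3 * partS m (Suc j) / 2 - y"
  using pos[of j] by (simp_all add: rescaled_profile_def profile_on_pieces partS_Suc field_simps)

lemma strict_mono_partS: "strict_mono (partS m)"
  by (rule strict_monoI_Suc) (simp add: partS_Suc pos)

lemma partS_nonneg: "0 \<le> partS m j"
  unfolding partS_def by (intro sum_nonneg) (simp add: less_imp_le pos)

lemma partS_unbounded: "\<exists>n. x < partS m n"
proof -
  have "eventually (\<lambda>n. x < partS m n) sequentially"
    using div by (simp add: filterlim_at_top_dense partS_def)
  then show ?thesis
    by (auto simp: eventually_sequentially)
qed

lemma ex_partS_le_less:
  assumes "0 \<le> x"
  shows "\<exists>j. partS m j \<le> x \<and> x < partS m (Suc j)"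
proof -
  obtain n where "x < partS m n"
    using partS_unbounded by blast
  then obtain j where "\<forall>i\<le>j. \<not> x < partS m i" "x < partS m (Suc j)"
    using ex_least_nat_less[of "\<lambda>n. x < partS m n"] assms by auto
  then show ?thesis
    by (auto simp: not_less)
qed

lemma ex_partS_less_le:
  assumes "0 < x"
  shows "\<exists>j. partS m j < x \<and> x \<le> partS m (Suc j)"
proof -
  obtain n where "x \<le> partS m n"
    using partS_unbounded less_imp_le by blast
  then obtain j where "\<forall>i\<le>j. \<not> x \<le> partS m i" "x \<le> partS m (Suc j)"
    using ex_least_nat_less[of "\<lambda>n. x \<le> partS m n"] assms by auto
  then show ?thesis
    by (auto simp: not_le)
qed

lemma bigF_eq_rescaled_profile:
  assumes "partS m j < y" "y \<le> partS m (Suc j)"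
  shows "bigF m y = rescaled_profile j y"
proof -
  have "(THE j. partS m j < y \<and> y \<le> partS m (Suc j)) = j"
  proof (rule the_equality)
    fix k assume "partS m k < y \<and> y \<le> partS m (Suc k)"
    with assms have "k < Suc j" "j < Suc k"
      using strict_mono_less[OF strict_mono_partS] by (meson less_le_trans)+
    then show "k = j" by simp
  qed (use assms in simp)
  moreover have "\<not> y \<le> 0"
    using partS_nonneg[of j] assms(1) by linarith
  ultimately show ?thesis
    by (simp add: bigF_def fj_eq_rescaled_profile)
qed

lemma bigF_left_of_partS:
  "\<exists>e>0. \<forall>y. partS m j - e < y \<and> y \<le> partS m j \<longrightarrow> bigF m y = 3 * partS m j / 2 - y"
proof (cases j)
  case 0
  then show ?thesis
    by (intro exI[of _ 1]) (simp add: bigF_def)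
next
  case (Suc k)
  have "bigF m y = 3 * partS m j / 2 - y" if "partS m j - m k / 16 < y" "y \<le> partS m j" for y
  proof -
    have "bigF m y = rescaled_profile k y"
      using that pos[of k] Suc by (intro bigF_eq_rescaled_profile) (simp_all add: partS_Suc)
    also have "\<dots> = 3 * partS m j / 2 - y"
      using rescaled_profile_right[of k y] that Suc by (simp add: partS_Suc)
    finally show ?thesis .
  qed
  then show ?thesis
    using pos[of k] by (intro exI[of _ "m k / 16"]) auto
qed

lemma bigF_eq_rescaled_profile_near:
  assumes "partS m j \<le> x" "x < partS m (Suc j)"
  shows "\<exists>e>0. \<forall>y\<in>ball x e. bigF m y = rescaled_profile j y"
proof -
  obtain d where "d > 0"
    and left: "\<And>y. partS m j - d < y \<Longrightarrow> y \<le> partS m j \<Longrightarrow> bigF m y = 3 * partS m j / 2 - y"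
    using bigF_left_of_partS by blast
  have "bigF m y = rescaled_profile j y" if "y \<in> ball x (min d (partS m (Suc j) - x))" for y
  proof (cases "y \<le> partS m j")
    case True
    then show ?thesis
      using left[of y] that assms pos[of j] by (simp add: rescaled_profile_left dist_real_def)
  next
    case False
    then show ?thesis
      using that by (intro bigF_eq_rescaled_profile) (auto simp: dist_real_def)
  qed
  then show ?thesis
    using \<open>d > 0\<close> assms(2) by (intro exI[of _ "min d (partS m (Suc j) - x)"]) auto
qed

lemma bigF_locally_rescaled_profile: "\<exists>j. \<exists>e>0. \<forall>y\<in>ball x e. bigF m y = rescaled_profile j y"
proof (cases "x < 0")
  case True
  have "bigF m y = rescaled_profile 0 y" if "y \<in> ball x (- x)" for y
  proof -
    have "y < 0"
      using that by (simp add: dist_real_def abs_less_iff)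
    then show ?thesis
      using pos[of 0] by (simp add: bigF_def rescaled_profile_left)
  qed
  then show ?thesis
    using True by (intro exI[of _ 0] exI[of _ "- x"]) auto
next
  case False
  then obtain j where "partS m j \<le> x" "x < partS m (Suc j)"
    using ex_partS_le_less[of x] by auto
  then show ?thesis
    using bigF_eq_rescaled_profile_near by blast
qed

lemma bigF_has_derivative_near:
  "\<exists>j. \<exists>e>0. \<forall>y\<in>ball x e. (bigF m has_real_derivative profile_deriv ((y - partS m j) / m j)) (at y)"
proof -
  obtain j e where "e > 0" and eq: "\<forall>y\<in>ball x e. bigF m y = rescaled_profile j y"
    using bigF_locally_rescaled_profile by blast
  have "(bigF m has_real_derivative profile_deriv ((y - partS m j) / m j)) (at y)" if "y \<in> ball x e" for y
    by (rule has_field_derivative_transform_within_open[OF rescaled_profile_has_derivative open_ball that])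
       (use eq in simp)
  then show ?thesis
    using \<open>e > 0\<close> by blast
qed

lemma bigF_differentiable: "bigF m differentiable (at x)"
  using bigF_has_derivative_near[of x] real_differentiable_def centre_in_ball by meson

lemma continuous_on_bigF: "continuous_on UNIV (bigF m)"
  by (intro continuous_at_imp_continuous_on differentiable_imp_continuous_within ballI bigF_differentiable)

lemma deriv_bigF_locally_lipschitz: "\<exists>e>0. \<exists>L. L-lipschitz_on (ball x e) (deriv (bigF m))"
proof -
  obtain j e where "e > 0"
    and der: "\<forall>y\<in>ball x e. (bigF m has_real_derivative profile_deriv ((y - partS m j) / m j)) (at y)"
    using bigF_has_derivative_near by blast
  have "(1 / m j)-lipschitz_on (ball x e) (\<lambda>y. (y - partS m j) / m j)"
    using pos[of j] by (intro lipschitz_onI) (simp_all add: dist_real_def abs_divide flip: diff_divide_distrib)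
  then have "(3000 * (1 / m j))-lipschitz_on (ball x e) (\<lambda>y. profile_deriv ((y - partS m j) / m j))"
    by (rule lipschitz_on_compose2) (rule lipschitz_on_subset[OF profile_deriv_lipschitz], simp)
  then have "(3000 / m j)-lipschitz_on (ball x e) (\<lambda>y. profile_deriv ((y - partS m j) / m j))"
    by simp
  then have "(3000 / m j)-lipschitz_on (ball x e) (deriv (bigF m))"
    by (rule lipschitz_on_transform) (simp add: DERIV_imp_deriv der)
  then show ?thesis
    using \<open>e > 0\<close> by blast
qed

lemma bigF_partS: "bigF m (partS m j) = partS m j / 2"
proof -
  obtain e where "e > 0" "\<forall>y. partS m j - e < y \<and> y \<le> partS m j \<longrightarrow> bigF m y = 3 * partS m j / 2 - y"
    using bigF_left_of_partS by blast
  then show ?thesis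
    by simp
qed

lemma bigF_has_derivative_partS: "(bigF m has_real_derivative - 1) (at (partS m j))"
proof -
  obtain e where "e > 0" and eq: "\<forall>y\<in>ball (partS m j) e. bigF m y = rescaled_profile j y"
    using bigF_eq_rescaled_profile_near[of j "partS m j"] pos[of j] by (auto simp: partS_Suc)
  have "(bigF m has_real_derivative profile_deriv ((partS m j - partS m j) / m j)) (at (partS m j))"
    by (rule has_field_derivative_transform_within_open
        [OF rescaled_profile_has_derivative open_ball[of "partS m j" e]])
       (use \<open>e > 0\<close> eq in auto)
  then show ?thesis
    by (simp add: profile_deriv_on_pieces)
qed

lemma bdd_below_bigF:
  assumes "bdd_above (range m)"
  shows "bdd_below (range (bigF m))"
proof -
  obtain B where B: "\<And>k. m k \<le> B"
    using assms by (auto simp: bdd_above_def)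
  obtain P where "P \<le> 0" and P: "\<forall>u\<in>{0..1}. P \<le> profile u"
    using profile_bounded_below_on_unit_interval by blast
  have "B * P \<le> bigF m y" for y
  proof (cases "y \<le> 0")
    case True
    have "0 \<le> B"
      using pos[of 0] B[of 0] by linarith
    with \<open>P \<le> 0\<close> have "B * P \<le> 0"
      by (simp add: mult_nonneg_nonpos)
    with True show ?thesis
      by (simp add: bigF_def)
  next
    case False
    then obtain j where j: "partS m j < y" "y \<le> partS m (Suc j)"
      using ex_partS_less_le[of y] by auto
    define u where "u = (y - partS m j) / m j"
    have "u \<in> {0..1}"
      using j pos[of j] by (simp add: u_def partS_Suc field_simps)
    have "B * P \<le> m j * P"
      using B[of j] \<open>P \<le> 0\<close> by (rule mult_right_mono_neg)
    also have "\<dots> \<le> m j * profile u"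
      using P \<open>u \<in> {0..1}\<close> pos[of j] by (simp add: mult_left_mono less_imp_le)
    also have "\<dots> \<le> bigF m y"
      using j partS_nonneg[of j] by (simp add: bigF_eq_rescaled_profile rescaled_profile_def u_def)
    finally show ?thesis .
  qed
  then show ?thesis
    by (intro bdd_belowI2)
qed

end

theorem proposition5p3:
  fixes m :: "nat \<Rightarrow> real"
  assumes pos: "\<And>k. m k > 0"
    and div: "filterlim (\<lambda>n. \<Sum>k<n. m k) at_top sequentially"
    and lim0: "m \<longlonglongrightarrow> 0"
  shows "continuous_on UNIV (bigF m)
    \<and> (\<forall>x. bigF m differentiable (at x))
    \<and> bdd_below (range (bigF m))
    \<and> (\<forall>x. \<exists>e>0. \<exists>L. L-lipschitz_on (ball x e) (deriv (bigF m)))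
    \<and> (\<forall>j. bigF m (partS m j) = partS m j / 2)
    \<and> (\<forall>j. (bigF m has_real_derivative -1) (at (partS m j)))"
proof -
  interpret divergent_step_sizes m
    using pos div by unfold_locales
  have "bdd_above (range m)"
    using lim0 by (intro Bseq_bdd_above convergent_imp_Bseq convergentI)
  then show ?thesis
    by (intro conjI allI continuous_on_bigF bigF_differentiable bdd_below_bigF
        deriv_bigF_locally_lipschitz bigF_partS bigF_has_derivative_partS)
qed

end
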